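(* For all $k\in\mathbb{N}$: (a) all off-diagonal entries of $\bar L^{(k)}+(c^{(k)}-\pi^{(k)})(c^{(k)}-\pi^{(k)})^T$ are nonpositive (and thus so are all off-diagonal entries of $\bar L^{(k)}$ and of $L^{(k)}$); (b) $L^{(k)}$ is a Laplacian matrix; (c) $S^{(k)}$ is positive semidefinite.
   Context: $\rho=1+\sqrt2$; $\alpha_t=\rho^{\nu(t+1)-1}+1$ ($\nu(i)$ the largest $j$ with $2^j\mid i$). For $k\in\mathbb{N}$ and $n=2^k-1$, $\pi^{(k)}=[\alpha_0,\dots,\alpha_{n-1}]\in\mathbb{R}^n$ (column vector), and $c^{(k)}\in\mathbb{R}^n$ is defined by $c^{(1)}=[2(\rho-1)]$, $c^{(k+1)}=[\pi^{(k)},(1+\rho^{-k})(\rho^{k-1}+1),\rho c^{(k)}-(\rho-1-\rho^{-k})\pi^{(k)}]$. Let $d^{(k)}=c^{(k)}-\pi^{(k)}$ and $N^{(k)}=\bar L^{(k)}+d^{(k)}(d^{(k)})^T$. Define $\bar L^{(1)}=[2(\rho-1)]$ and, in block form with blocks of sizes $n,1,n$, $$\bar L^{(k+1)}=\begin{bmatrix}N^{(k)}&-\rho^k d^{(k)}&0\\-\rho^k (d^{(k)})^T&(\rho^{k-1}+1)(\rho^{k+1}+1)&-\rho(\pi^{(k)})^T\\0&-\rho\pi^{(k)}&\rho^2N^{(k)}\end{bmatrix}-d^{(k+1)}(d^{(k+1)})^T.$$ Define $L^{(k)}=\begin{bmatrix}\bar L^{(k)}&-c^{(k)}\\-(c^{(k)})^T&2(\rho^k-1)\end{bmatrix}\in\mathbb{R}^{(n+1)\times(n+1)}$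 and $S^{(k)}=\begin{bmatrix}1/\sqrt2&(-e_1+e_{n+1})^T\\-e_1+e_{n+1}&L^{(k)}\end{bmatrix}\in\mathbb{R}^{(n+2)\times(n+2)}$, where $e_1,e_{n+1}$ are standard basis vectors of $\mathbb{R}^{n+1}$. A Laplacian matrix is a symmetric matrix whose off-diagonal entries are nonpositive and whose row sums are all $0$. *)

theory Defs
  imports Complex_Main
begin

text \<open>Matrices and vectors of varying dimension are represented as functions
 \<open>nat \<Rightarrow> nat \<Rightarrow> real\<close> / \<open>nat \<Rightarrow> real\<close> with 0-based indices; only indices below the
 stated size are meaningful (entries outside are defined to be 0).
 For k \<ge> 1, n = 2^k - 1; \<open>pi_vec k\<close>, \<open>c_vec k\<close>, \<open>d_vec k\<close> have size n,
 \<open>Lbar k\<close>, \<open>Nmat k\<close> are n x n, \<open>Lmat k\<close> is (n+1) x (n+1), \<open>Smat k\<close> is (n+2) x (n+2).\<close>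

definition rho :: real where "rho = 1 + sqrt 2"

definition nu :: "nat \<Rightarrow> nat" where "nu i = (GREATEST j. 2 ^ j dvd i)"

definition alpha :: "nat \<Rightarrow> real" where
  "alpha t = rho powi (int (nu (t + 1)) - 1) + 1"

definition dimn :: "nat \<Rightarrow> nat" where "dimn k = 2 ^ k - 1"

definition pi_vec :: "nat \<Rightarrow> nat \<Rightarrow> real" where
  "pi_vec k i = (if i < dimn k then alpha i else 0)"

fun c_vec :: "nat \<Rightarrow> nat \<Rightarrow> real" where
  "c_vec 0 = (\<lambda>_. 0)"
| "c_vec (Suc 0) = (\<lambda>i. if i = 0 then 2 * (rho - 1) else 0)"
| "c_vec (Suc (Suc k)) = (let K = Suc k; n = dimn K in
     (\<lambda>i. if i < n then pi_vec K i
          else if i = n then (1 + inverse (rho ^ K)) * (rho ^ (K - 1) + 1)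
          else if i < 2 * n + 1 then rho * c_vec K (i - n - 1)
                 - (rho - 1 - inverse (rho ^ K)) * pi_vec K (i - n - 1)
          else 0))"

definition d_vec :: "nat \<Rightarrow> nat \<Rightarrow> real" where
  "d_vec k i = c_vec k i - pi_vec k i"

fun Lbar :: "nat \<Rightarrow> nat \<Rightarrow> nat \<Rightarrow> real" where
  "Lbar 0 = (\<lambda>_ _. 0)"
| "Lbar (Suc 0) = (\<lambda>i j. if i = 0 \<and> j = 0 then 2 * (rho - 1) else 0)"
| "Lbar (Suc (Suc k)) = (let K = Suc k; n = dimn K;
       N = (\<lambda>i j. Lbar K i j + d_vec K i * d_vec K j);
       B = (\<lambda>i j.
         if i < n \<and> j < n then N i j
         else if i < n \<and> j = n then - (rho ^ K) * d_vec K i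
         else if i = n \<and> j < n then - (rho ^ K) * d_vec K j
         else if i = n \<and> j = n then (rho ^ (K - 1) + 1) * (rho ^ (K + 1) + 1)
         else if i = n \<and> n < j \<and> j < 2 * n + 1 then - rho * pi_vec K (j - n - 1)
         else if n < i \<and> i < 2 * n + 1 \<and> j = n then - rho * pi_vec K (i - n - 1)
         else if n < i \<and> i < 2 * n + 1 \<and> n < j \<and> j < 2 * n + 1
           then rho ^ 2 * N (i - n - 1) (j - n - 1)
         else 0)
     in (\<lambda>i j. if i < 2 * n + 1 \<and> j < 2 * n + 1
               then B i j - d_vec (Suc K) i * d_vec (Suc K) j else 0))"

definition Nmat :: "nat \<Rightarrow> nat \<Rightarrow> nat \<Rightarrow> real" where
  "Nmat k i j = Lbar k i j + d_vec k i * d_vec k j"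

definition Lmat :: "nat \<Rightarrow> nat \<Rightarrow> nat \<Rightarrow> real" where
  "Lmat k i j = (let n = dimn k in
     if i < n \<and> j < n then Lbar k i j
     else if i < n \<and> j = n then - c_vec k i
     else if i = n \<and> j < n then - c_vec k j
     else if i = n \<and> j = n then 2 * (rho ^ k - 1)
     else 0)"

definition fvec :: "nat \<Rightarrow> nat \<Rightarrow> real" where
  "fvec k i = (if i = 0 then -1 else if i = dimn k then 1 else 0)"

definition Smat :: "nat \<Rightarrow> nat \<Rightarrow> nat \<Rightarrow> real" where
  "Smat k i j = (let n = dimn k in
     if i = 0 \<and> j = 0 then 1 / sqrt 2
     else if i = 0 \<and> 1 \<le> j \<and> j \<le> n + 1 then fvec k (j - 1)
     else if j = 0 \<and> 1 \<le> i \<and> i \<le> n + 1 then fvec k (i - 1)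
     else if 1 \<le> i \<and> i \<le> n + 1 \<and> 1 \<le> j \<and> j \<le> n + 1 then Lmat k (i - 1) (j - 1)
     else 0)"

definition is_laplacian :: "nat \<Rightarrow> (nat \<Rightarrow> nat \<Rightarrow> real) \<Rightarrow> bool" where
  "is_laplacian m A \<longleftrightarrow>
     (\<forall>i<m. \<forall>j<m. A i j = A j i) \<and>
     (\<forall>i<m. \<forall>j<m. i \<noteq> j \<longrightarrow> A i j \<le> 0) \<and>
     (\<forall>i<m. (\<Sum>j<m. A i j) = 0)"

definition psd :: "nat \<Rightarrow> (nat \<Rightarrow> nat \<Rightarrow> real) \<Rightarrow> bool" where
  "psd m A \<longleftrightarrow>
     (\<forall>i<m. \<forall>j<m. A i j = A j i) \<and>
     (\<forall>x :: nat \<Rightarrow> real. (\<Sum>i<m. \<Sum>j<m. x i * A i j * x j) \<ge> 0)"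

end

theory Submission
  imports Defs
begin

(* Write N = Lbar + d d^T.  Along the block recursion the following invariant is preserved,
   the only algebraic input being rho^2 = 2 rho + 1: d >= 0, N is symmetric with nonpositive
   off-diagonal entries, N 1 = c + (rho^k - 1) d, 1^T pi = rho^k - 1 and 1^T c = 2 (rho^k - 1).
   Hence Lbar 1 = N 1 - (1^T d) d = c, so L has zero row sums and is a Laplacian.  The quadratic
   form of a Laplacian dominates each of its edge terms, here c_0 (y_0 - y_n)^2 with
   c_0 >= sqrt 2, and completing the square against the corner entry 1 / sqrt 2 of S shows that
   S is positive semidefinite. *)

lemma sum_lessThan_add:
  fixes f :: "nat \<Rightarrow> 'a::comm_monoid_add"
  shows "(\<Sum>j<m + n. f j) = (\<Sum>j<m. f j) + (\<Sum>p<n. f (m + p))"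
  by (induction n) (simp_all add: add.assoc)

lemma sum_lessThan_double_Suc:
  fixes f :: "nat \<Rightarrow> 'a::comm_monoid_add"
  shows "(\<Sum>j<2 * n + 1. f j) = (\<Sum>j<n. f j) + f n + (\<Sum>p<n. f (Suc (n + p)))"
  using sum_lessThan_add[of f "Suc n" n] by (simp add: mult_2)

lemma less_double_Suc_cases:
  fixes i n :: nat
  assumes "i < 2 * n + 1"
  obtains "i < n" | "i = n" | p where "p < n" "i = Suc (n + p)"
proof -
  consider "i < n" | "i = n" | "n < i"
    by linarith
  then show thesis
  proof cases
    case 3
    with assms have "i - n - 1 < n" "i = Suc (n + (i - n - 1))"
      by auto
    then show thesis
      using that by blast
  qed (use that in auto)
qed

lemma laplacian_quadratic_form:
  assumes "is_laplacian m A"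
  shows "(\<Sum>i<m. \<Sum>j<m. y i * A i j * y j) = (\<Sum>i<m. \<Sum>j<m. - A i j * (y i - y j)\<^sup>2) / 2"
proof -
  have sym: "A i j = A j i" and row: "(\<Sum>j<m. A i j) = 0" if "i < m" "j < m" for i j
    using assms that unfolding is_laplacian_def by blast+
  have "(\<Sum>i<m. \<Sum>j<m. A i j * (y i)\<^sup>2) = (\<Sum>i<m. (\<Sum>j<m. A i j) * (y i)\<^sup>2)"
    by (simp add: sum_distrib_right)
  also have "\<dots> = 0"
    using row by simp
  finally have left: "(\<Sum>i<m. \<Sum>j<m. A i j * (y i)\<^sup>2) = 0" .
  have "(\<Sum>i<m. \<Sum>j<m. A i j * (y j)\<^sup>2) = (\<Sum>j<m. (\<Sum>i<m. A j i) * (y j)\<^sup>2)"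
    by (subst sum.swap) (simp add: sum_distrib_right sym)
  also have "\<dots> = 0"
    using row by simp
  finally have right: "(\<Sum>i<m. \<Sum>j<m. A i j * (y j)\<^sup>2) = 0" .
  have "- A i j * (y i - y j)\<^sup>2 = 2 * (y i * A i j * y j) - A i j * (y i)\<^sup>2 - A i j * (y j)\<^sup>2" for i j
    by (simp add: power2_eq_square algebra_simps)
  then have "(\<Sum>i<m. \<Sum>j<m. - A i j * (y i - y j)\<^sup>2)
      = (\<Sum>i<m. \<Sum>j<m. 2 * (y i * A i j * y j))
        - (\<Sum>i<m. \<Sum>j<m. A i j * (y i)\<^sup>2) - (\<Sum>i<m. \<Sum>j<m. A i j * (y j)\<^sup>2)"
    by (simp only: sum_subtractf)
  also have "\<dots> = 2 * (\<Sum>i<m. \<Sum>j<m. y i * A i j * y j)"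
    unfolding left right by (simp add: sum_distrib_left)
  finally show ?thesis
    by simp
qed

lemma laplacian_quadratic_form_ge:
  assumes lap: "is_laplacian m A" and "p < m" "q < m" "p \<noteq> q"
  shows "(\<Sum>i<m. \<Sum>j<m. y i * A i j * y j) \<ge> - A p q * (y p - y q)\<^sup>2"
proof -
  define g where "g = (\<lambda>(i, j). - A i j * (y i - y j)\<^sup>2)"
  have g_nonneg: "g ij \<ge> 0" if "ij \<in> {..<m} \<times> {..<m}" for ij
    using that lap unfolding g_def is_laplacian_def
    by (cases "fst ij = snd ij") (auto simp: mult_nonpos_nonneg split: prod.splits)
  have "2 * (- A p q * (y p - y q)\<^sup>2) = (\<Sum>ij\<in>{(p, q), (q, p)}. g ij)"
    using lap \<open>p < m\<close> \<open>q < m\<close> \<open>p \<noteq> q\<close>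
    unfolding g_def is_laplacian_def by (simp add: power2_commute)
  also have "\<dots> \<le> (\<Sum>ij\<in>{..<m} \<times> {..<m}. g ij)"
    using assms g_nonneg by (intro sum_mono2) auto
  also have "\<dots> = 2 * (\<Sum>i<m. \<Sum>j<m. y i * A i j * y j)"
    unfolding laplacian_quadratic_form[OF lap] g_def by (simp add: sum.cartesian_product)
  finally show ?thesis
    by simp
qed

lemma rho_gt_1: "rho > 1"
  unfolding rho_def by simp

lemma rho_squared: "rho\<^sup>2 = 2 * rho + 1"
  unfolding rho_def by (simp add: power2_eq_square algebra_simps)

lemma sqrt_2_eq_rho: "sqrt 2 = rho - 1"
  unfolding rho_def by simp

lemma inverse_rho: "inverse rho = rho - 2"
  using rho_squared rho_gt_1 by (simp add: field_simps power2_eq_square)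

lemma rho_power_eq_pred: "K \<ge> 1 \<Longrightarrow> rho ^ K = rho * rho ^ (K - 1)"
  by (simp flip: power_Suc)

lemma rho_power_Suc_eq_pred: "K \<ge> 1 \<Longrightarrow> rho ^ Suc K = (2 * rho + 1) * rho ^ (K - 1)"
  by (simp add: rho_power_eq_pred flip: rho_squared)

(* The inductive steps below reduce to these identities via rho^K = rho y and
   rho^(K+1) = (2 rho + 1) y, where y = rho^(K-1). *)
lemma rho_identity_sum_c_vec:
  "y > 0 \<Longrightarrow> (rho * y - 1) + (1 + inverse (rho * y)) * (y + 1)
      + (rho * (2 * (rho * y - 1)) - (rho - 1 - inverse (rho * y)) * (rho * y - 1))
    = 2 * ((2 * rho + 1) * y - 1)"
  using rho_gt_1 rho_squared by (simp add: field_simps) algebra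

lemma rho_identity_row_mid:
  "y > 0 \<Longrightarrow> - (rho * y * (rho * y - 1)) + (y + 1) * ((2 * rho + 1) * y + 1) - rho * (rho * y - 1)
    = (1 + inverse (rho * y)) * (y + 1) + inverse (rho * y) * (y + 1) * ((2 * rho + 1) * y - 1)"
  using rho_gt_1 rho_squared by (simp add: field_simps) algebra

lemma rho_identity_row_high:
  "y > 0 \<Longrightarrow> - (rho * b) + rho\<^sup>2 * (a + (a - b) * (rho * y - 1))
    = (rho * a - (rho - 1 - inverse (rho * y)) * b)
      + (rho * (a - b) + inverse (rho * y) * b) * ((2 * rho + 1) * y - 1)"
  using rho_gt_1 rho_squared by (simp add: field_simps) algebra

lemma nu_eqI:
  assumes "2 ^ j dvd i" "\<not> 2 ^ Suc j dvd i"
  shows "nu i = j"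
  unfolding nu_def
proof (rule Greatest_equality)
  fix j' assume "2 ^ j' dvd i"
  show "j' \<le> j"
  proof (rule ccontr)
    assume "\<not> j' \<le> j"
    then have "(2::nat) ^ Suc j dvd 2 ^ j'"
      by (intro le_imp_power_dvd) simp
    with \<open>2 ^ j' dvd i\<close> assms(2) show False
      using dvd_trans by blast
  qed
qed fact

lemma
  assumes "i > 0"
  shows power_nu_dvd: "2 ^ nu i dvd i"
    and not_power_Suc_nu_dvd: "\<not> 2 ^ Suc (nu i) dvd i"
proof -
  have bound: "j \<le> i" if "2 ^ j dvd i" for j
  proof -
    have "(2::nat) ^ j \<le> i"
      using that assms by (simp add: dvd_imp_le)
    with less_exp[of j] show ?thesis
      by linarith
  qed
  show "2 ^ nu i dvd i"
    unfolding nu_def by (rule GreatestI_nat[of _ 0]) (auto intro: bound)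
  show "\<not> 2 ^ Suc (nu i) dvd i"
  proof
    assume "2 ^ Suc (nu i) dvd i"
    then have "Suc (nu i) \<le> nu i"
      unfolding nu_def by (rule Greatest_le_nat) (auto intro: bound)
    then show False
      by simp
  qed
qed

lemma nu_power_of_two: "nu (2 ^ k) = k"
  by (rule nu_eqI) (auto dest: nat_dvd_not_less)

lemma nu_add_power_of_two:
  assumes "0 < q" "q < 2 ^ k"
  shows "nu (2 ^ k + q) = nu q"
proof (rule nu_eqI)
  have "(2::nat) ^ nu q \<le> q"
    using power_nu_dvd[OF assms(1)] assms(1) by (simp add: dvd_imp_le)
  then have "nu q < k"
    using assms(2) by (metis le_less_trans nat_power_less_imp_less zero_less_numeral)
  then have Suc_nu_dvd: "(2::nat) ^ Suc (nu q) dvd 2 ^ k"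
    by (intro le_imp_power_dvd) simp
  then have "(2::nat) ^ nu q dvd 2 ^ k"
    by (rule dvd_trans[rotated]) simp
  then show "2 ^ nu q dvd 2 ^ k + q"
    using power_nu_dvd[OF assms(1)] by (rule dvd_add)
  show "\<not> 2 ^ Suc (nu q) dvd 2 ^ k + q"
    using Suc_nu_dvd not_power_Suc_nu_dvd[OF assms(1)] by (simp add: dvd_add_right_iff)
qed

lemma dimn_1: "dimn (Suc 0) = 1"
  by (simp add: dimn_def)

lemma dimn_Suc: "dimn (Suc k) = 2 * dimn k + 1"
proof -
  have "(1::nat) \<le> 2 ^ k"
    by simp
  then show ?thesis
    unfolding dimn_def power_Suc by linarith
qed

lemma dimn_pos: "k \<ge> 1 \<Longrightarrow> dimn k > 0"
  unfolding dimn_def using one_less_power[of "2::nat" k] by simp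

lemma alpha_pos: "alpha t > 0"
  unfolding alpha_def using rho_gt_1 by (simp add: add_pos_nonneg)

lemma alpha_0: "alpha 0 = sqrt 2"
proof -
  have "nu 1 = 0"
    by (rule nu_eqI) auto
  then show ?thesis
    unfolding alpha_def using inverse_rho sqrt_2_eq_rho by (simp add: power_int_minus)
qed

lemma alpha_dimn: "k \<ge> 1 \<Longrightarrow> alpha (dimn k) = rho ^ (k - 1) + 1"
  unfolding alpha_def dimn_def
  by (simp add: nu_power_of_two power_int_diff of_nat_diff flip: power_int_of_nat)

lemma alpha_dimn_shift: "p < dimn k \<Longrightarrow> alpha (dimn k + 1 + p) = alpha p"
proof -
  assume "p < dimn k"
  then have "nu (2 ^ k + (p + 1)) = nu (p + 1)"
    unfolding dimn_def by (intro nu_add_power_of_two) auto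
  moreover have "dimn k + 1 + p + 1 = 2 ^ k + (p + 1)"
    unfolding dimn_def by simp
  ultimately show ?thesis
    unfolding alpha_def by simp
qed

lemma
  assumes "p < dimn K"
  shows pi_vec_Suc_low: "pi_vec (Suc K) p = pi_vec K p"
    and pi_vec_Suc_high: "pi_vec (Suc K) (Suc (dimn K + p)) = pi_vec K p"
  using assms alpha_dimn_shift[OF assms] by (simp_all add: pi_vec_def dimn_Suc)

lemma pi_vec_Suc_mid: "K \<ge> 1 \<Longrightarrow> pi_vec (Suc K) (dimn K) = rho ^ (K - 1) + 1"
  by (simp add: pi_vec_def dimn_Suc alpha_dimn)

lemma
  assumes "K \<ge> 1" "p < dimn K"
  shows c_vec_Suc_low: "c_vec (Suc K) p = pi_vec K p"
    and c_vec_Suc_high: "c_vec (Suc K) (Suc (dimn K + p))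
      = rho * c_vec K p - (rho - 1 - inverse (rho ^ K)) * pi_vec K p"
  using assms by (auto simp: Let_def dest!: Suc_le_D)

lemma c_vec_Suc_mid:
  "K \<ge> 1 \<Longrightarrow> c_vec (Suc K) (dimn K) = (1 + inverse (rho ^ K)) * (rho ^ (K - 1) + 1)"
  by (auto simp: Let_def dest!: Suc_le_D)

lemma
  assumes "K \<ge> 1" "p < dimn K"
  shows d_vec_Suc_low: "d_vec (Suc K) p = 0"
    and d_vec_Suc_high:
      "d_vec (Suc K) (Suc (dimn K + p)) = rho * d_vec K p + inverse (rho ^ K) * pi_vec K p"
  unfolding d_vec_def c_vec_Suc_low[OF assms] c_vec_Suc_high[OF assms]
    pi_vec_Suc_low[OF assms(2)] pi_vec_Suc_high[OF assms(2)]
  by (simp_all add: algebra_simps)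

lemma d_vec_Suc_mid: "K \<ge> 1 \<Longrightarrow> d_vec (Suc K) (dimn K) = inverse (rho ^ K) * (rho ^ (K - 1) + 1)"
  by (simp add: d_vec_def c_vec_Suc_mid pi_vec_Suc_mid algebra_simps)

lemma
  assumes "K \<ge> 1" "p < dimn K" "q < dimn K"
  shows Nmat_Suc_low_low: "Nmat (Suc K) p q = Nmat K p q"
    and Nmat_Suc_low_high: "Nmat (Suc K) p (Suc (dimn K + q)) = 0"
    and Nmat_Suc_high_low: "Nmat (Suc K) (Suc (dimn K + p)) q = 0"
    and Nmat_Suc_high_high:
      "Nmat (Suc K) (Suc (dimn K + p)) (Suc (dimn K + q)) = rho\<^sup>2 * Nmat K p q"
  using assms by (auto simp: Nmat_def Let_def dest!: Suc_le_D)

lemma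
  assumes "K \<ge> 1" "p < dimn K"
  shows Nmat_Suc_low_mid: "Nmat (Suc K) p (dimn K) = - (rho ^ K * d_vec K p)"
    and Nmat_Suc_mid_low: "Nmat (Suc K) (dimn K) p = - (rho ^ K * d_vec K p)"
    and Nmat_Suc_mid_high: "Nmat (Suc K) (dimn K) (Suc (dimn K + p)) = - (rho * pi_vec K p)"
    and Nmat_Suc_high_mid: "Nmat (Suc K) (Suc (dimn K + p)) (dimn K) = - (rho * pi_vec K p)"
  using assms by (auto simp: Nmat_def Let_def dest!: Suc_le_D)

lemma Nmat_Suc_mid_mid:
  "K \<ge> 1 \<Longrightarrow> Nmat (Suc K) (dimn K) (dimn K) = (rho ^ (K - 1) + 1) * (rho ^ (K + 1) + 1)"
  by (auto simp: Nmat_def Let_def dest!: Suc_le_D)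

lemma pi_vec_nonneg: "pi_vec k i \<ge> 0"
  unfolding pi_vec_def using alpha_pos less_imp_le by auto

lemma sum_pi_vec: "k \<ge> 1 \<Longrightarrow> (\<Sum>i<dimn k. pi_vec k i) = rho ^ k - 1"
proof (induction k rule: nat_induct_at_least)
  case base
  show ?case
    by (simp add: dimn_1 pi_vec_def alpha_0 sqrt_2_eq_rho)
next
  case (Suc K)
  have "(\<Sum>i<dimn (Suc K). pi_vec (Suc K) i) = 2 * (rho ^ K - 1) + (rho ^ (K - 1) + 1)"
    unfolding dimn_Suc sum_lessThan_double_Suc
    using Suc by (simp add: pi_vec_Suc_low pi_vec_Suc_high pi_vec_Suc_mid)
  also have "\<dots> = rho ^ Suc K - 1"
    unfolding rho_power_Suc_eq_pred[OF Suc.hyps] rho_power_eq_pred[OF Suc.hyps]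
    by (simp add: algebra_simps)
  finally show ?case .
qed

lemma sum_c_vec: "k \<ge> 1 \<Longrightarrow> (\<Sum>i<dimn k. c_vec k i) = 2 * (rho ^ k - 1)"
proof (induction k rule: nat_induct_at_least)
  case base
  show ?case
    by (simp add: dimn_1)
next
  case (Suc K)
  have "(\<Sum>i<dimn (Suc K). c_vec (Suc K) i)
      = (rho ^ K - 1) + (1 + inverse (rho ^ K)) * (rho ^ (K - 1) + 1)
        + (rho * (2 * (rho ^ K - 1)) - (rho - 1 - inverse (rho ^ K)) * (rho ^ K - 1))"
    unfolding dimn_Suc sum_lessThan_double_Suc
    using Suc sum_pi_vec[OF Suc.hyps]
    by (simp add: c_vec_Suc_low c_vec_Suc_mid c_vec_Suc_high sum_subtractf flip: sum_distrib_left)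
  also have "\<dots> = 2 * (rho ^ Suc K - 1)"
    unfolding rho_power_Suc_eq_pred[OF Suc.hyps] rho_power_eq_pred[OF Suc.hyps]
    using rho_gt_1 by (intro rho_identity_sum_c_vec) simp
  finally show ?case .
qed

lemma sum_d_vec: "k \<ge> 1 \<Longrightarrow> (\<Sum>i<dimn k. d_vec k i) = rho ^ k - 1"
  by (simp add: d_vec_def sum_subtractf sum_c_vec sum_pi_vec)

lemma d_vec_nonneg: "k \<ge> 1 \<Longrightarrow> i < dimn k \<Longrightarrow> d_vec k i \<ge> 0"
proof (induction k arbitrary: i rule: nat_induct_at_least)
  case base
  then show ?case
    using rho_gt_1 by (simp add: dimn_1 d_vec_def pi_vec_def alpha_0 sqrt_2_eq_rho)
next
  case (Suc K)
  from \<open>i < dimn (Suc K)\<close> show ?case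
    unfolding dimn_Suc
    by (cases rule: less_double_Suc_cases)
      (use Suc rho_gt_1 pi_vec_nonneg in \<open>auto simp: d_vec_Suc_low d_vec_Suc_mid d_vec_Suc_high\<close>)
qed

lemma c_vec_nonneg: "k \<ge> 1 \<Longrightarrow> i < dimn k \<Longrightarrow> c_vec k i \<ge> 0"
  using d_vec_nonneg[of k i] pi_vec_nonneg[of k i] unfolding d_vec_def by linarith

lemma c_vec_0_ge: "k \<ge> 1 \<Longrightarrow> c_vec k 0 \<ge> sqrt 2"
proof (induction k rule: nat_induct_at_least)
  case base
  show ?case
    using rho_gt_1 by (simp add: sqrt_2_eq_rho)
next
  case (Suc K)
  then show ?case
    by (simp add: c_vec_Suc_low dimn_pos pi_vec_def alpha_0)
qed

lemma Nmat_symmetric: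
  "k \<ge> 1 \<Longrightarrow> i < dimn k \<Longrightarrow> j < dimn k \<Longrightarrow> Nmat k i j = Nmat k j i"
proof (induction k arbitrary: i j rule: nat_induct_at_least)
  case base
  then show ?case
    by (simp add: dimn_1)
next
  case (Suc K)
  from \<open>i < dimn (Suc K)\<close> \<open>j < dimn (Suc K)\<close> show ?case
    unfolding dimn_Suc
    by (elim less_double_Suc_cases)
      (use Suc in \<open>auto simp: Nmat_Suc_low_low Nmat_Suc_low_mid Nmat_Suc_low_high Nmat_Suc_mid_low
         Nmat_Suc_mid_high Nmat_Suc_high_low Nmat_Suc_high_mid Nmat_Suc_high_high\<close>)
qed

lemma Nmat_offdiag_nonpos:
  "k \<ge> 1 \<Longrightarrow> i < dimn k \<Longrightarrow> j < dimn k \<Longrightarrow> i \<noteq> j \<Longrightarrow> Nmat k i j \<le> 0"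
proof (induction k arbitrary: i j rule: nat_induct_at_least)
  case base
  then show ?case
    by (simp add: dimn_1)
next
  case (Suc K)
  have "0 \<le> rho ^ K * d_vec K p" "0 \<le> rho * pi_vec K p" if "p < dimn K" for p
    using that Suc.hyps rho_gt_1 d_vec_nonneg pi_vec_nonneg by simp_all
  with \<open>i < dimn (Suc K)\<close> \<open>j < dimn (Suc K)\<close> show ?case
    unfolding dimn_Suc
    by (elim less_double_Suc_cases)
      (use Suc in \<open>auto simp: Nmat_Suc_low_low Nmat_Suc_low_mid Nmat_Suc_low_high Nmat_Suc_mid_low
         Nmat_Suc_mid_high Nmat_Suc_high_low Nmat_Suc_high_mid Nmat_Suc_high_high
         mult_nonneg_nonpos\<close>)
qed

lemma Nmat_row_sum_Suc:
  assumes "K \<ge> 1" "i < dimn (Suc K)"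
    and "\<And>i. i < dimn K \<Longrightarrow> (\<Sum>j<dimn K. Nmat K i j) = c_vec K i + d_vec K i * (rho ^ K - 1)"
  shows "(\<Sum>j<dimn (Suc K). Nmat (Suc K) i j) = c_vec (Suc K) i + d_vec (Suc K) i * (rho ^ Suc K - 1)"
proof -
  let ?n = "dimn K"
  have blocks: "(\<Sum>j<dimn (Suc K). Nmat (Suc K) i j)
      = (\<Sum>j<?n. Nmat (Suc K) i j) + Nmat (Suc K) i ?n + (\<Sum>q<?n. Nmat (Suc K) i (Suc (?n + q)))"
    unfolding dimn_Suc by (rule sum_lessThan_double_Suc)
  have y: "rho ^ (K - 1) > 0"
    using rho_gt_1 by simp
  note rho_powers = rho_power_eq_pred[OF assms(1)] rho_power_Suc_eq_pred[OF assms(1)]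
  from \<open>i < dimn (Suc K)\<close> have "i < 2 * ?n + 1"
    by (simp add: dimn_Suc)
  then show ?thesis
  proof (cases rule: less_double_Suc_cases)
    case 1
    then have "(\<Sum>j<dimn (Suc K). Nmat (Suc K) i j)
        = (c_vec K i + d_vec K i * (rho ^ K - 1)) - rho ^ K * d_vec K i"
      using assms by (simp add: blocks Nmat_Suc_low_low Nmat_Suc_low_mid Nmat_Suc_low_high)
    also have "\<dots> = pi_vec K i"
      by (simp add: d_vec_def algebra_simps)
    finally show ?thesis
      using 1 assms by (simp add: c_vec_Suc_low d_vec_Suc_low)
  next
    case 2
    have "(\<Sum>j<dimn (Suc K). Nmat (Suc K) i j)
        = - (rho ^ K * (rho ^ K - 1)) + (rho ^ (K - 1) + 1) * (rho ^ Suc K + 1) - rho * (rho ^ K - 1)"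
      unfolding blocks using 2 assms by (simp add: Nmat_Suc_mid_low Nmat_Suc_mid_mid Nmat_Suc_mid_high
          sum_negf sum_d_vec sum_pi_vec flip: sum_distrib_left)
    also have "\<dots> = (1 + inverse (rho ^ K)) * (rho ^ (K - 1) + 1)
        + inverse (rho ^ K) * (rho ^ (K - 1) + 1) * (rho ^ Suc K - 1)"
      using rho_identity_row_mid[OF y] unfolding rho_powers .
    finally show ?thesis
      using 2 assms by (simp add: c_vec_Suc_mid d_vec_Suc_mid)
  next
    case (3 p)
    have "(\<Sum>j<dimn (Suc K). Nmat (Suc K) i j)
        = - (rho * pi_vec K p) + rho\<^sup>2 * (c_vec K p + d_vec K p * (rho ^ K - 1))"
      unfolding blocks using 3 assms by (simp add: Nmat_Suc_high_low Nmat_Suc_high_mid Nmat_Suc_high_high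
          flip: sum_distrib_left)
    also have "\<dots> = (rho * c_vec K p - (rho - 1 - inverse (rho ^ K)) * pi_vec K p)
        + (rho * d_vec K p + inverse (rho ^ K) * pi_vec K p) * (rho ^ Suc K - 1)"
      using rho_identity_row_high[OF y] unfolding rho_powers d_vec_def .
    finally show ?thesis
      using 3 assms by (simp add: c_vec_Suc_high d_vec_Suc_high)
  qed
qed

lemma Nmat_row_sum:
  "k \<ge> 1 \<Longrightarrow> i < dimn k
    \<Longrightarrow> (\<Sum>j<dimn k. Nmat k i j) = c_vec k i + d_vec k i * (rho ^ k - 1)"
proof (induction k arbitrary: i rule: nat_induct_at_least)
  case base
  then show ?case
    by (simp add: dimn_1 Nmat_def d_vec_def pi_vec_def alpha_0 sqrt_2_eq_rho algebra_simps)
next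
  case (Suc K)
  then show ?case
    by (intro Nmat_row_sum_Suc)
qed

lemma Lbar_eq_Nmat: "Lbar k i j = Nmat k i j - d_vec k i * d_vec k j"
  by (simp add: Nmat_def)

lemma Lbar_offdiag_nonpos:
  assumes "k \<ge> 1" "i < dimn k" "j < dimn k" "i \<noteq> j"
  shows "Lbar k i j \<le> 0"
proof -
  have "Nmat k i j \<le> 0" "d_vec k i * d_vec k j \<ge> 0"
    using assms Nmat_offdiag_nonpos d_vec_nonneg by simp_all
  then show ?thesis
    by (simp add: Lbar_eq_Nmat)
qed

lemma Lmat_symmetric:
  "k \<ge> 1 \<Longrightarrow> i < dimn k + 1 \<Longrightarrow> j < dimn k + 1 \<Longrightarrow> Lmat k i j = Lmat k j i"
  by (auto simp: Lmat_def Lbar_eq_Nmat Nmat_symmetric elim!: less_SucE)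

lemma Lmat_offdiag_nonpos:
  "k \<ge> 1 \<Longrightarrow> i < dimn k + 1 \<Longrightarrow> j < dimn k + 1 \<Longrightarrow> i \<noteq> j \<Longrightarrow> Lmat k i j \<le> 0"
  by (auto simp: Lmat_def Lbar_offdiag_nonpos c_vec_nonneg elim!: less_SucE)

lemma Lmat_row_sum:
  assumes "k \<ge> 1" "i < dimn k + 1"
  shows "(\<Sum>j<dimn k + 1. Lmat k i j) = 0"
proof -
  consider "i < dimn k" | "i = dimn k"
    using assms(2) by linarith
  then show ?thesis
  proof cases
    case 1
    then have "(\<Sum>j<dimn k. Lmat k i j)
        = (\<Sum>j<dimn k. Nmat k i j) - d_vec k i * (\<Sum>j<dimn k. d_vec k j)"
      by (simp add: Lmat_def Let_def Lbar_eq_Nmat sum_subtractf sum_distrib_left)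
    then show ?thesis
      using 1 assms(1) by (simp add: Nmat_row_sum sum_d_vec Lmat_def)
  next
    case 2
    then show ?thesis
      using assms(1) by (simp add: Lmat_def sum_negf sum_c_vec)
  qed
qed

lemma Lmat_laplacian: "k \<ge> 1 \<Longrightarrow> is_laplacian (dimn k + 1) (Lmat k)"
  unfolding is_laplacian_def using Lmat_symmetric Lmat_offdiag_nonpos Lmat_row_sum by blast

lemma sum_fvec:
  assumes "k \<ge> 1"
  shows "(\<Sum>j<dimn k + 1. fvec k j * y j) = y (dimn k) - y 0"
proof -
  have "(\<Sum>j<dimn k + 1. fvec k j * y j)
      = (\<Sum>j<dimn k + 1. (if j = dimn k then y j else 0) - (if j = 0 then y j else 0))"
    using dimn_pos[OF assms] by (intro sum.cong) (auto simp: fvec_def)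
  then show ?thesis
    by (simp add: sum_subtractf)
qed

lemma Smat_quadratic_form:
  assumes "k \<ge> 1"
  shows "(\<Sum>i<dimn k + 2. \<Sum>j<dimn k + 2. x i * Smat k i j * x j)
    = (x 0)\<^sup>2 / sqrt 2 + 2 * x 0 * (x (Suc (dimn k)) - x 1)
      + (\<Sum>i<dimn k + 1. \<Sum>j<dimn k + 1. x (Suc i) * Lmat k i j * x (Suc j))"
proof -
  let ?n = "dimn k"
  have "(\<Sum>j<?n + 1. x 0 * fvec k j * x (Suc j)) = x 0 * (\<Sum>j<?n + 1. fvec k j * x (Suc j))"
    by (simp only: sum_distrib_left mult.assoc)
  also have "\<dots> = x 0 * (x (Suc ?n) - x 1)"
    using sum_fvec[OF assms, of "\<lambda>j. x (Suc j)"] by simp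
  finally have border: "(\<Sum>j<?n + 1. x 0 * fvec k j * x (Suc j)) = x 0 * (x (Suc ?n) - x 1)" .
  have "?n + 2 = Suc (?n + 1)"
    by simp
  then have "(\<Sum>i<?n + 2. \<Sum>j<?n + 2. x i * Smat k i j * x j)
    = x 0 * Smat k 0 0 * x 0 + (\<Sum>j<?n + 1. x 0 * Smat k 0 (Suc j) * x (Suc j))
      + (\<Sum>i<?n + 1. x (Suc i) * Smat k (Suc i) 0 * x 0
        + (\<Sum>j<?n + 1. x (Suc i) * Smat k (Suc i) (Suc j) * x (Suc j)))"
    by (simp only: sum.lessThan_Suc_shift)
  also have "\<dots> = (x 0)\<^sup>2 / sqrt 2 + (\<Sum>j<?n + 1. x 0 * fvec k j * x (Suc j))
      + (\<Sum>i<?n + 1. x 0 * fvec k i * x (Suc i)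
        + (\<Sum>j<?n + 1. x (Suc i) * Lmat k i j * x (Suc j)))"
    by (simp add: Smat_def power2_eq_square mult.commute mult.left_commute)
  also have "\<dots> = (x 0)\<^sup>2 / sqrt 2 + 2 * x 0 * (x (Suc ?n) - x 1)
      + (\<Sum>i<?n + 1. \<Sum>j<?n + 1. x (Suc i) * Lmat k i j * x (Suc j))"
    by (simp only: sum.distrib border)
  finally show ?thesis .
qed

lemma Smat_symmetric:
  "k \<ge> 1 \<Longrightarrow> i < dimn k + 2 \<Longrightarrow> j < dimn k + 2 \<Longrightarrow> Smat k i j = Smat k j i"
  using Lmat_symmetric[of k "i - 1" "j - 1"] by (auto simp: Smat_def Let_def)

lemma Smat_psd:
  assumes "k \<ge> 1"
  shows "psd (dimn k + 2) (Smat k)"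
  unfolding psd_def
proof (intro conjI allI impI)
  fix x :: "nat \<Rightarrow> real"
  let ?n = "dimn k"
  let ?F = "x (Suc ?n) - x 1"
  have "- Lmat k 0 ?n * (x 1 - x (Suc ?n))\<^sup>2
      \<le> (\<Sum>i<?n + 1. \<Sum>j<?n + 1. x (Suc i) * Lmat k i j * x (Suc j))"
    using laplacian_quadratic_form_ge[OF Lmat_laplacian[OF assms], of 0 ?n "\<lambda>i. x (Suc i)"]
      dimn_pos[OF assms] by simp
  moreover have "- Lmat k 0 ?n = c_vec k 0"
    using dimn_pos[OF assms] by (simp add: Lmat_def)
  moreover have "sqrt 2 * ?F\<^sup>2 \<le> c_vec k 0 * ?F\<^sup>2"
    using c_vec_0_ge[OF assms] by (intro mult_right_mono) auto
  ultimately have "sqrt 2 * ?F\<^sup>2 \<le> (\<Sum>i<?n + 1. \<Sum>j<?n + 1. x (Suc i) * Lmat k i j * x (Suc j))"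
    by (simp add: power2_commute)
  moreover have "(x 0)\<^sup>2 / sqrt 2 + 2 * x 0 * ?F + sqrt 2 * ?F\<^sup>2 = (x 0 + sqrt 2 * ?F)\<^sup>2 / sqrt 2"
    by (simp add: field_simps power2_eq_square)
  moreover have "(x 0 + sqrt 2 * ?F)\<^sup>2 / sqrt 2 \<ge> 0"
    by simp
  ultimately show "(\<Sum>i<?n + 2. \<Sum>j<?n + 2. x i * Smat k i j * x j) \<ge> 0"
    unfolding Smat_quadratic_form[OF assms] by linarith
qed (use Smat_symmetric[OF assms] in blast)

theorem lemma14:
  fixes k :: nat
  assumes "k \<ge> 1"
  shows "(\<forall>i<dimn k. \<forall>j<dimn k. i \<noteq> j \<longrightarrow>
            Lbar k i j + (c_vec k i - pi_vec k i) * (c_vec k j - pi_vec k j) \<le> 0)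
       \<and> (\<forall>i<dimn k. \<forall>j<dimn k. i \<noteq> j \<longrightarrow> Lbar k i j \<le> 0)
       \<and> (\<forall>i<dimn k + 1. \<forall>j<dimn k + 1. i \<noteq> j \<longrightarrow> Lmat k i j \<le> 0)
       \<and> is_laplacian (dimn k + 1) (Lmat k)
       \<and> psd (dimn k + 2) (Smat k)"
  using Nmat_offdiag_nonpos[OF assms] Lbar_offdiag_nonpos[OF assms] Lmat_offdiag_nonpos[OF assms]
    Lmat_laplacian[OF assms] Smat_psd[OF assms]
  unfolding Nmat_def d_vec_def by blast

end
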